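(* Let $x\sim\mathcal N(0,I_d)$ and $\gamma(z)\defeq\frac{e^z(1-e^z)}{(1+e^z)^3}$. Fix $\theta\in\mathbb{R}^d$ with $c<\|\theta\|_2<C$ for constants $0<c<C$, and let $t=\|\theta\|_2$. Then $\mathbb{E}\big[\gamma(\langle x,\theta\rangle)\,x^{\otimes3}\big]=a(t)\,\theta^{\otimes3}+b(t)\,\mathrm{sym}(I\otimes\theta),$ where, with $Z\sim\mathcal N(0,1)$, $b(t)=\frac1t\mathbb{E}[Z\gamma(tZ)]$ and $a(t)=\frac1{t^3}\big(\mathbb{E}[Z^3\gamma(tZ)]-3\mathbb{E}[Z\gamma(tZ)]\big)$. Moreover, there are constants $c_1,c_2>0$ depending only on $c,C$ such that for every $v\in\mathbb{R}^d$, $-c_2\|v\|_2^2\le \mathbb{E}\big[\gamma(\langle x,\theta\rangle)\langle x,v\rangle^2\langle x,\theta\rangle\big]\le -c_1\|v\|_2^2.$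
   Context: $\gamma$ is the third derivative of $z\mapsto\log(1+e^{-z})$ (equivalently the derivative of $\sigma(z)(1-\sigma(z))$ with $\sigma$ the sigmoid). $\mathrm{sym}(I\otimes\theta)$ denotes the 3-tensor with entries $\delta_{jk}\theta_i+\delta_{ik}\theta_j+\delta_{ij}\theta_k$. *)

theory Defs
  imports "HOL-Probability.Probability"
begin

definition gam :: "real \<Rightarrow> real" where
  "gam z = exp z * (1 - exp z) / (1 + exp z) ^ 3"

definition std_normal_M :: "real measure" where
  "std_normal_M = density lborel std_normal_density"

text \<open>Standard Gaussian N(0, I_d) on R^d, with R^d represented as functions
  on the index set {..<d} (product measure of d independent N(0,1) coordinates).\<close>
definition gauss_vec :: "nat \<Rightarrow> (nat \<Rightarrow> real) measure" where
  "gauss_vec d = PiM {..<d} (\<lambda>_. std_normal_M)"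

definition ip :: "nat \<Rightarrow> (nat \<Rightarrow> real) \<Rightarrow> (nat \<Rightarrow> real) \<Rightarrow> real" where
  "ip d x y = (\<Sum>i<d. x i * y i)"

definition vnorm :: "nat \<Rightarrow> (nat \<Rightarrow> real) \<Rightarrow> real" where
  "vnorm d x = sqrt (ip d x x)"

definition coef_b :: "real \<Rightarrow> real" where
  "coef_b t = (1 / t) * (\<integral>z. z * gam (t * z) \<partial>std_normal_M)"

definition coef_a :: "real \<Rightarrow> real" where
  "coef_a t = (1 / t ^ 3) * ((\<integral>z. z ^ 3 * gam (t * z) \<partial>std_normal_M)
                            - 3 * (\<integral>z. z * gam (t * z) \<partial>std_normal_M))"

definition kd :: "nat \<Rightarrow> nat \<Rightarrow> real" where
  "kd i j = (if i = j then 1 else 0)"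

end

theory Submission
  imports Defs "HOL-Real_Asymp.Real_Asymp" "HOL-Computational_Algebra.Polynomial"
begin

text \<open>
  Gaussian integration by parts, \<open>E[x\<^sub>k F(x)] = E[\<partial>\<^sub>k F(x)]\<close>, applied to a derivative
  of \<open>\<gamma>\<close> at \<open>\<langle>x, \<theta>\<rangle>\<close> times a coordinate monomial lowers the degree of the monomial by one
  at the price of one more derivative of \<open>\<gamma>\<close>. Three such steps give
  \<open>E[\<gamma>(\<langle>x, \<theta>\<rangle>) x\<^sub>i x\<^sub>j x\<^sub>k] = \<theta>\<^sub>i \<theta>\<^sub>j \<theta>\<^sub>k E[\<gamma>'''(\<langle>x, \<theta>\<rangle>)] + sym(I \<otimes> \<theta>)\<^sub>i\<^sub>j\<^sub>k E[\<gamma>'(\<langle>x, \<theta>\<rangle>)]\<close>.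
  Since \<open>\<langle>x, \<theta>\<rangle>\<close> has law \<open>N(0, t\<^sup>2)\<close> with \<open>t = |\<theta>|\<close>, these are the one-dimensional
  expectations \<open>E[\<gamma>'''(tZ)]\<close> and \<open>E[\<gamma>'(tZ)]\<close>, which the one-dimensional identity
  \<open>E[Z h(Z)] = E[h'(Z)]\<close> identifies with \<open>a(t)\<close> and \<open>b(t)\<close>. All derivatives of \<open>\<gamma>\<close> are
  polynomials in the sigmoid, hence bounded, so every integrand is dominated by a polynomial weight.

  Contracting the tensor with \<open>v, v, \<theta>\<close> writes \<open>E[\<gamma>(\<langle>x, \<theta>\<rangle>) \<langle>x, v\<rangle>\<^sup>2 \<langle>x, \<theta>\<rangle>]\<close> as
  \<open>E\<^sub>3 w\<^sub>3 + E\<^sub>1 w\<^sub>1\<close> with \<open>E\<^sub>k = E[Z\<^sup>k \<gamma>(tZ)]\<close>, \<open>w\<^sub>3 = \<langle>v, \<theta>\<rangle>\<^sup>2 / t\<close> and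
  \<open>w\<^sub>1 = t |v|\<^sup>2 - w\<^sub>3\<close>, both nonnegative by Cauchy-Schwarz. For odd \<open>k\<close> the integrand
  \<open>z\<^sup>k \<gamma>(tz)\<close> is nonpositive and bounded away from zero on \<open>[1, 2]\<close> uniformly in
  \<open>t \<in> [c, C]\<close>, so \<open>E\<^sub>1\<close> and \<open>E\<^sub>3\<close> lie in \<open>[-2, -m(c, C)]\<close>.
\<close>

section \<open>Gaussian integration by parts on the real line\<close>

lemma prob_space_std_normal_M: "prob_space std_normal_M"
  unfolding std_normal_M_def by (rule prob_space_normal_density) simp

lemma sets_std_normal_M [measurable_cong, simp]: "sets std_normal_M = sets borel"
  by (simp add: std_normal_M_def)

lemma space_std_normal_M [simp]: "space std_normal_M = UNIV"
  by (simp add: std_normal_M_def)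

lemma integral_std_normal_M:
  "f \<in> borel_measurable borel \<Longrightarrow>
    (\<integral>x. f x \<partial>std_normal_M) = (\<integral>x. std_normal_density x * f x \<partial>lborel)"
  unfolding std_normal_M_def by (subst integral_density) auto

lemma integrable_std_normal_M_iff:
  "f \<in> borel_measurable borel \<Longrightarrow>
    integrable std_normal_M f \<longleftrightarrow> integrable lborel (\<lambda>x. std_normal_density x * f x)"
  unfolding std_normal_M_def by (subst integrable_density) auto

lemma integrable_std_normal_M_power: "integrable std_normal_M (\<lambda>x. x ^ k)"
  using integrable_std_normal_moment[of k] by (simp add: integrable_std_normal_M_iff)

lemma integrable_std_normal_M_poly_weight: "integrable std_normal_M (\<lambda>x. (1 + x\<^sup>2) ^ n)"
proof -
  have binomial: "(1 + x\<^sup>2) ^ n = (\<Sum>k\<le>n. of_nat (n choose k) * x ^ (2 * k))" for x :: real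
    using binomial_ring[of "x\<^sup>2" 1 n] by (simp add: add.commute power_mult)
  show ?thesis
    unfolding binomial by (intro Bochner_Integration.integrable_sum
        Bochner_Integration.integrable_mult_right integrable_std_normal_M_power)
qed

lemma integrable_std_normal_M_poly_bounded:
  fixes f :: "real \<Rightarrow> real"
  assumes "f \<in> borel_measurable borel" and "\<And>x. \<bar>f x\<bar> \<le> K * (1 + x\<^sup>2) ^ n"
  shows "integrable std_normal_M f"
proof (rule Bochner_Integration.integrable_bound)
  show "integrable std_normal_M (\<lambda>x. K * (1 + x\<^sup>2) ^ n)"
    using integrable_std_normal_M_poly_weight by simp
  show "AE x in std_normal_M. norm (f x) \<le> norm (K * (1 + x\<^sup>2) ^ n)"
    using order_trans[OF assms(2) abs_ge_self] by (intro AE_I2) simp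
qed (use assms(1) in measurable)

lemma abs_le_one_plus_square: "\<bar>x :: real\<bar> \<le> 1 + x\<^sup>2"
proof -
  have "0 \<le> (\<bar>x\<bar> - 1)\<^sup>2" by simp
  then show ?thesis by (simp add: power2_diff)
qed

lemma abs_power_le_poly_weight: "k \<le> n \<Longrightarrow> \<bar>x :: real\<bar> ^ k \<le> (1 + x\<^sup>2) ^ n"
  using power_mono[OF abs_le_one_plus_square[of x] abs_ge_zero, of k]
    power_increasing[of k n "1 + x\<^sup>2 :: real"]
  by simp

lemma abs_power_mult_le_poly_weight:
  fixes z b :: real
  assumes "\<bar>b\<bar> \<le> B" and "l \<le> k"
  shows "\<bar>z ^ l * b\<bar> \<le> B * (1 + z\<^sup>2) ^ k"
  using mult_mono[OF assms(1) abs_power_le_poly_weight[OF assms(2)]] order_trans[OF abs_ge_zero assms(1)]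
  by (simp add: abs_mult power_abs mult.commute)

lemma bounded_range_common_bound:
  fixes f g :: "'a \<Rightarrow> real"
  assumes "bounded (range f)" and "bounded (range g)"
  obtains B where "\<And>u. \<bar>f u\<bar> \<le> B" and "\<And>u. \<bar>g u\<bar> \<le> B"
proof -
  obtain B1 B2 where "\<And>u. \<bar>f u\<bar> \<le> B1" and "\<And>u. \<bar>g u\<bar> \<le> B2"
    using assms unfolding bounded_iff by auto
  then show thesis
    by (intro that[of "max B1 B2"]) (auto intro: le_max_iff_disj[THEN iffD2])
qed

lemma tendsto_poly_weight_std_normal_density:
  "((\<lambda>y. K * (1 + y\<^sup>2) ^ n * std_normal_density y) \<longlongrightarrow> 0) at_top"
  "((\<lambda>y. K * (1 + y\<^sup>2) ^ n * std_normal_density y) \<longlongrightarrow> 0) at_bot"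
  unfolding std_normal_density_def by real_asymp+

lemma std_normal_integration_by_parts:
  fixes h h' :: "real \<Rightarrow> real"
  assumes h: "\<And>y. (h has_real_derivative h' y) (at y)" and h': "continuous_on UNIV h'"
    and bound: "\<And>y. \<bar>h y\<bar> \<le> K * (1 + y\<^sup>2) ^ n" and bound': "\<And>y. \<bar>h' y\<bar> \<le> K' * (1 + y\<^sup>2) ^ n"
  shows "(\<integral>y. y * h y \<partial>std_normal_M) = (\<integral>y. h' y \<partial>std_normal_M)"
proof -
  let ?p = std_normal_density
  have "continuous_on UNIV h"
    using h by (meson DERIV_continuous continuous_at_imp_continuous_on)
  then have [measurable]: "h \<in> borel_measurable borel" "h' \<in> borel_measurable borel"
    using h' by (auto intro: borel_measurable_continuous_onI)
  have "(?p has_real_derivative (- y * ?p y)) (at y)" for y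
    unfolding std_normal_density_def by (auto intro!: derivative_eq_intros simp: field_simps)
  from DERIV_mult[OF h this]
  have deriv: "((\<lambda>y. h y * ?p y) has_vector_derivative (h' y * ?p y - y * h y * ?p y)) (at y)" for y
    by (simp flip: has_real_derivative_iff_has_vector_derivative add: algebra_simps)
  have yh: "\<bar>y * h y\<bar> \<le> K * (1 + y\<^sup>2) ^ Suc n" for y
  proof -
    have "\<bar>y * h y\<bar> \<le> (1 + y\<^sup>2) * (K * (1 + y\<^sup>2) ^ n)"
      unfolding abs_mult by (intro mult_mono abs_le_one_plus_square bound) auto
    then show ?thesis by (simp add: algebra_simps)
  qed
  have int: "integrable std_normal_M h'" "integrable std_normal_M (\<lambda>y. y * h y)"
    by (rule integrable_std_normal_M_poly_bounded[OF _ bound']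
        integrable_std_normal_M_poly_bounded[OF _ yh],
        measurable)+
  have lim: "((\<lambda>y. h y * ?p y) \<longlongrightarrow> 0) F"
    if "((\<lambda>y. K * (1 + y\<^sup>2) ^ n * ?p y) \<longlongrightarrow> 0) F" for F
  proof (rule Lim_null_comparison[OF _ that])
    show "\<forall>\<^sub>F y in F. norm (h y * ?p y) \<le> K * (1 + y\<^sup>2) ^ n * ?p y"
      using bound
      by (intro always_eventually allI) (simp add: abs_mult normal_density_nonneg mult_right_mono)
  qed
  have int_lborel: "integrable lborel (\<lambda>y. ?p y * h' y)" "integrable lborel (\<lambda>y. ?p y * (y * h y))"
    using int by (simp_all add: integrable_std_normal_M_iff)
  then have "set_integrable lborel (einterval (-\<infinity>) \<infinity>) (\<lambda>y. h' y * ?p y - y * h y * ?p y)"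
    unfolding einterval_eq_UNIV set_integrable_def
    using Bochner_Integration.integrable_diff[OF int_lborel] by (simp add: algebra_simps)
  moreover have "isCont (\<lambda>y. h' y * ?p y - y * h y * ?p y) y" for y
    using \<open>continuous_on UNIV h\<close> h' by (auto intro!: continuous_intros
        simp: continuous_on_eq_continuous_at normal_density_def)
  ultimately have "(LBINT y=-\<infinity>..\<infinity>. h' y * ?p y - y * h y * ?p y) = 0 - 0"
    using deriv lim[OF tendsto_poly_weight_std_normal_density(1)]
      lim[OF tendsto_poly_weight_std_normal_density(2)]
    by (intro interval_integral_FTC_integrable)
      (simp_all add: at_right_MInf at_left_PInf filterlim_filtermap o_def)
  then have "(\<integral>y. ?p y * h' y - ?p y * (y * h y) \<partial>lborel) = 0"
    by (simp add: interval_lebesgue_integral_def einterval_eq_UNIV set_lebesgue_integral_def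
        algebra_simps)
  then show ?thesis
    using Bochner_Integration.integral_diff[OF int_lborel] by (simp add: integral_std_normal_M)
qed

section \<open>The law of a linear form of a Gaussian vector\<close>

lemma ip_self_nonneg: "0 \<le> ip d x x"
  unfolding ip_def by (simp add: sum_nonneg)

lemma vnorm_square: "(vnorm d x)\<^sup>2 = ip d x x"
  by (simp add: vnorm_def ip_self_nonneg)

lemma prob_space_gauss_vec: "prob_space (gauss_vec d)"
  unfolding gauss_vec_def by (intro prob_space_PiM prob_space_std_normal_M)

lemma sets_gauss_vec [measurable_cong]: "sets (gauss_vec d) = sets (Pi\<^sub>M {..<d} (\<lambda>_. borel))"
  unfolding gauss_vec_def by (rule sets_PiM_cong) auto

lemma space_gauss_vec: "space (gauss_vec d) = (\<Pi>\<^sub>E i\<in>{..<d}. UNIV)"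
  unfolding gauss_vec_def by (simp add: space_PiM)

lemma measurable_gauss_vec_coord [measurable]: "i < d \<Longrightarrow> (\<lambda>x. x i) \<in> borel_measurable (gauss_vec d)"
  unfolding gauss_vec_def by measurable

lemma measurable_ip [measurable]: "(\<lambda>x. ip d x \<theta>) \<in> borel_measurable (gauss_vec d)"
  unfolding ip_def gauss_vec_def by measurable

lemma distr_gauss_vec_coord: "i < d \<Longrightarrow> distr (gauss_vec d) std_normal_M (\<lambda>x. x i) = std_normal_M"
  unfolding gauss_vec_def by (rule distr_PiM_component) (auto intro: prob_space_std_normal_M)

lemma distributed_gauss_vec_coord:
  assumes "i < d"
  shows "distributed (gauss_vec d) lborel (\<lambda>x. x i) std_normal_density"
proof -
  have "distr (gauss_vec d) lborel (\<lambda>x. x i) = distr (gauss_vec d) std_normal_M (\<lambda>x. x i)"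
    by (rule distr_cong) auto
  then show ?thesis
    using assms distr_gauss_vec_coord
    by (auto simp: distributed_def std_normal_M_def normal_density_nonneg)
qed

lemma indep_vars_gauss_vec_coords:
  assumes "d \<noteq> 0"
  shows "prob_space.indep_vars (gauss_vec d) (\<lambda>_. borel) (\<lambda>i x. x i) {..<d}"
proof -
  interpret G: prob_space "gauss_vec d" by (rule prob_space_gauss_vec)
  have "distr (gauss_vec d) (Pi\<^sub>M {..<d} (\<lambda>_. borel)) (\<lambda>x. \<lambda>i\<in>{..<d}. x i)
      = distr (gauss_vec d) (gauss_vec d) (\<lambda>x. x)"
    by (rule distr_cong) (auto simp: sets_gauss_vec space_gauss_vec PiE_def extensional_restrict)
  also have "\<dots> = gauss_vec d"
    by (rule distr_id2) simp
  also have "\<dots> = Pi\<^sub>M {..<d} (\<lambda>i. distr (gauss_vec d) borel (\<lambda>x. x i))"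
  proof -
    have "distr (gauss_vec d) borel (\<lambda>x. x i) = distr (gauss_vec d) std_normal_M (\<lambda>x. x i)" for i
      by (rule distr_cong) auto
    then have "Pi\<^sub>M {..<d} (\<lambda>i. distr (gauss_vec d) borel (\<lambda>x. x i)) = Pi\<^sub>M {..<d} (\<lambda>_. std_normal_M)"
      by (intro PiM_cong) (simp_all add: distr_gauss_vec_coord)
    then show ?thesis by (simp only: gauss_vec_def[symmetric])
  qed
  finally show ?thesis
    using assms by (subst G.indep_vars_iff_distr_eq_PiM') auto
qed

lemma distributed_ip_gauss_vec:
  assumes "vnorm d \<theta> \<noteq> 0"
  shows "distributed (gauss_vec d) lborel (\<lambda>x. ip d x \<theta>) (normal_density 0 (vnorm d \<theta>))"
proof -
  interpret G: prob_space "gauss_vec d" by (rule prob_space_gauss_vec)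
  \<comment> \<open>Coordinates with \<open>\<theta> i = 0\<close> are dropped: \<open>normal_density\<close> needs a positive deviation.\<close>
  define J where "J = {i \<in> {..<d}. \<theta> i \<noteq> 0}"
  have J: "finite J" "J \<subseteq> {..<d}" by (auto simp: J_def)
  have ip: "ip d x \<theta> = (\<Sum>i\<in>J. \<theta> i * x i)" for x
    unfolding ip_def J_def by (rule sum.mono_neutral_cong_right) auto
  have "(\<Sum>i<d. \<theta> i * \<theta> i) = (\<Sum>i\<in>J. \<bar>\<theta> i\<bar>\<^sup>2)"
    unfolding J_def by (rule sum.mono_neutral_cong_right) (auto simp: power2_eq_square)
  then have norm: "vnorm d \<theta> = sqrt (\<Sum>i\<in>J. \<bar>\<theta> i\<bar>\<^sup>2)"
    by (simp add: vnorm_def ip_def)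
  have "J \<noteq> {}"
    using assms by (auto simp: norm)
  then have "d \<noteq> 0" using J by auto
  have "distributed (gauss_vec d) lborel (\<lambda>x. \<Sum>i\<in>J. \<theta> i * x i)
      (normal_density (\<Sum>i\<in>J. 0) (sqrt (\<Sum>i\<in>J. \<bar>\<theta> i\<bar>\<^sup>2)))"
  proof (rule G.sum_indep_normal)
    show "G.indep_vars (\<lambda>_. borel) (\<lambda>i x. \<theta> i * x i) J"
      using G.indep_vars_subset[OF indep_vars_gauss_vec_coords[OF \<open>d \<noteq> 0\<close>] J(2)]
      by (rule G.indep_vars_compose2[where Y = "\<lambda>i y. \<theta> i * y"]) auto
    show "distributed (gauss_vec d) lborel (\<lambda>x. \<theta> i * x i) (normal_density 0 \<bar>\<theta> i\<bar>)" if "i \<in> J" for i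
    proof -
      have "i < d" "\<theta> i \<noteq> 0" using that by (auto simp: J_def)
      from G.normal_density_affine[OF distributed_gauss_vec_coord[OF this(1)], of "\<theta> i" 0] this(2)
      show ?thesis by simp
    qed
  qed (use J \<open>J \<noteq> {}\<close> in \<open>auto simp: J_def\<close>)
  then show ?thesis by (simp add: ip norm)
qed

lemma integral_std_normal_M_scale:
  fixes f :: "real \<Rightarrow> real"
  assumes "0 < t" and [measurable]: "f \<in> borel_measurable borel"
  shows "(\<integral>z. f (t * z) \<partial>std_normal_M) = (\<integral>x. normal_density 0 t x * f x \<partial>lborel)"
proof -
  interpret prob_space std_normal_M by (rule prob_space_std_normal_M)
  have "distributed std_normal_M lborel (\<lambda>z. z) std_normal_density"
    by (simp add: distributed_def std_normal_M_def distr_id2 normal_density_nonneg)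
  from normal_density_affine[OF this, of t 0]
  have "distributed std_normal_M lborel (\<lambda>z. t * z) (normal_density 0 t)"
    using assms(1) by simp
  then show ?thesis
    by (subst distributed_integral) (auto simp: normal_density_nonneg)
qed

lemma integral_gauss_vec_ip:
  fixes f :: "real \<Rightarrow> real"
  assumes [measurable]: "f \<in> borel_measurable borel"
  shows "(\<integral>x. f (ip d x \<theta>) \<partial>gauss_vec d) = (\<integral>z. f (vnorm d \<theta> * z) \<partial>std_normal_M)"
proof (cases "vnorm d \<theta> = 0")
  case True
  have "\<theta> i = 0" if "i < d" for i
    using True that sum_nonneg_eq_0_iff[of "{..<d}" "\<lambda>i. \<theta> i * \<theta> i"]
    by (auto simp: vnorm_def ip_def)
  then have "ip d x \<theta> = 0" for x by (simp add: ip_def)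
  then have "(\<integral>x. f (ip d x \<theta>) \<partial>gauss_vec d) = f 0"
    using prob_space_gauss_vec by (simp add: prob_space.prob_space)
  moreover have "(\<integral>z. f (vnorm d \<theta> * z) \<partial>std_normal_M) = f 0"
    using True prob_space.prob_space[OF prob_space_std_normal_M] by simp
  ultimately show ?thesis by simp
next
  case False
  have "0 < vnorm d \<theta>"
    using False ip_self_nonneg[of d \<theta>] by (simp add: vnorm_def)
  then show ?thesis
    using distributed_integral[OF distributed_ip_gauss_vec[OF False]]
    by (simp add: integral_std_normal_M_scale normal_density_nonneg)
qed

section \<open>Gaussian integration by parts in \<open>R\<^sup>d\<close>\<close>

text \<open>
  Powers of this weight dominate the coordinate monomials, are integrable, and factor off
  \<open>(1 + y\<^sup>2)\<^sup>n\<close> along every coordinate line \<open>x(k := y)\<close>, which is the growth condition of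
  the one-dimensional integration by parts.
\<close>

definition gauss_weight :: "nat \<Rightarrow> (nat \<Rightarrow> real) \<Rightarrow> real" where
  "gauss_weight d x = (\<Prod>l<d. 1 + (x l)\<^sup>2)"

lemma gauss_weight_ge_1: "1 \<le> gauss_weight d x"
  unfolding gauss_weight_def by (intro prod_ge_1) auto

lemma gauss_weight_split:
  assumes "k < d"
  shows "gauss_weight d x = (1 + (x k)\<^sup>2) * gauss_weight d (x(k := 0))"
proof -
  have "(\<Prod>l\<in>{..<d} - {k}. 1 + (x l)\<^sup>2) = (\<Prod>l\<in>{..<d} - {k}. 1 + ((x(k := 0)) l)\<^sup>2)"
    by (rule prod.cong) auto
  then show ?thesis
    using assms unfolding gauss_weight_def by (simp add: prod.remove fun_upd_same del: fun_upd_apply)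
qed

lemma abs_coord_le_gauss_weight:
  assumes "i < d"
  shows "\<bar>x i\<bar> \<le> gauss_weight d x"
proof -
  have "1 + (x i)\<^sup>2 \<le> gauss_weight d x"
    using mult_left_mono[OF gauss_weight_ge_1, of "1 + (x i)\<^sup>2" d "x(i := 0)"] assms
    by (simp add: gauss_weight_split[of i d x] mult.commute)
  then show ?thesis
    using abs_le_one_plus_square[of "x i"] by linarith
qed

lemma gauss_weight_fun_upd:
  "k < d \<Longrightarrow> gauss_weight d (x(k := y)) = (1 + y\<^sup>2) * gauss_weight d (x(k := 0))"
  using gauss_weight_split[of k d "x(k := y)"] by simp

lemma product_sigma_finite_std_normal_M: "product_sigma_finite (\<lambda>_. std_normal_M)"
  unfolding product_sigma_finite_def
  using prob_space_std_normal_M prob_space_imp_sigma_finite by blast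

lemma integrable_gauss_vec_weight_bounded:
  fixes f :: "(nat \<Rightarrow> real) \<Rightarrow> real"
  assumes "f \<in> borel_measurable (gauss_vec d)" and "\<And>x. \<bar>f x\<bar> \<le> K * gauss_weight d x ^ n"
  shows "integrable (gauss_vec d) f"
proof (rule Bochner_Integration.integrable_bound)
  interpret product_sigma_finite "\<lambda>_. std_normal_M"
    by (rule product_sigma_finite_std_normal_M)
  have "integrable (gauss_vec d) (\<lambda>x. \<Prod>l<d. (1 + (x l)\<^sup>2) ^ n)"
    unfolding gauss_vec_def
    by (intro product_integrable_prod integrable_std_normal_M_poly_weight) auto
  then show "integrable (gauss_vec d) (\<lambda>x. K * gauss_weight d x ^ n)"
    by (simp add: gauss_weight_def prod_power_distrib)
  show "AE x in gauss_vec d. norm (f x) \<le> norm (K * gauss_weight d x ^ n)"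
    using order_trans[OF assms(2) abs_ge_self] by (intro AE_I2) simp
qed (use assms(1) in simp)

lemma gauss_vec_integration_by_parts:
  fixes F F' :: "(nat \<Rightarrow> real) \<Rightarrow> real"
  assumes k: "k < d"
    and [measurable]: "F \<in> borel_measurable (gauss_vec d)" "F' \<in> borel_measurable (gauss_vec d)"
    and deriv: "\<And>x y. ((\<lambda>y. F (x(k := y))) has_real_derivative F' (x(k := y))) (at y)"
    and cont: "\<And>x. continuous_on UNIV (\<lambda>y. F' (x(k := y)))"
    and bound: "\<And>x. \<bar>F x\<bar> \<le> K * gauss_weight d x ^ n"
    and bound': "\<And>x. \<bar>F' x\<bar> \<le> K' * gauss_weight d x ^ n"
  shows "(\<integral>x. x k * F x \<partial>gauss_vec d) = (\<integral>x. F' x \<partial>gauss_vec d)"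
proof -
  interpret product_sigma_finite "\<lambda>_. std_normal_M"
    by (rule product_sigma_finite_std_normal_M)
  define I where "I = {..<d} - {k}"
  have I: "{..<d} = insert k I" "finite I" "k \<notin> I"
    using k by (auto simp: I_def)
  have xkF: "\<bar>x k * F x\<bar> \<le> K * gauss_weight d x ^ Suc n" for x
  proof -
    have "\<bar>x k * F x\<bar> \<le> gauss_weight d x * (K * gauss_weight d x ^ n)"
      unfolding abs_mult using k bound gauss_weight_ge_1[of d x]
      by (intro mult_mono abs_coord_le_gauss_weight) auto
    then show ?thesis by (simp add: algebra_simps)
  qed
  have int: "integrable (gauss_vec d) (\<lambda>x. x k * F x)" "integrable (gauss_vec d) F'"
    by (rule integrable_gauss_vec_weight_bounded[OF _ xkF]
        integrable_gauss_vec_weight_bounded[OF _ bound'],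
        use k in measurable)+
  have line: "(\<integral>y. y * F (x(k := y)) \<partial>std_normal_M) = (\<integral>y. F' (x(k := y)) \<partial>std_normal_M)" for x
  proof (rule std_normal_integration_by_parts[OF deriv cont])
    fix y
    have weight: "gauss_weight d (x(k := y)) ^ n = gauss_weight d (x(k := 0)) ^ n * (1 + y\<^sup>2) ^ n"
      by (subst gauss_weight_fun_upd[OF k]) (simp add: power_mult_distrib mult.commute)
    show "\<bar>F (x(k := y))\<bar> \<le> K * gauss_weight d (x(k := 0)) ^ n * (1 + y\<^sup>2) ^ n"
      using bound[of "x(k := y)"] by (simp only: weight mult.assoc)
    show "\<bar>F' (x(k := y))\<bar> \<le> K' * gauss_weight d (x(k := 0)) ^ n * (1 + y\<^sup>2) ^ n"
      using bound'[of "x(k := y)"] by (simp only: weight mult.assoc)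
  qed
  have "(\<integral>x. x k * F x \<partial>gauss_vec d)
      = (\<integral>x. (\<integral>y. y * F (x(k := y)) \<partial>std_normal_M) \<partial>Pi\<^sub>M I (\<lambda>_. std_normal_M))"
    using product_integral_insert[OF I(2,3) int(1)[unfolded gauss_vec_def I(1)]]
    by (simp add: gauss_vec_def I(1))
  also have "\<dots> = (\<integral>x. (\<integral>y. F' (x(k := y)) \<partial>std_normal_M) \<partial>Pi\<^sub>M I (\<lambda>_. std_normal_M))"
    by (simp add: line)
  also have "\<dots> = (\<integral>x. F' x \<partial>gauss_vec d)"
    using product_integral_insert[OF I(2,3) int(2)[unfolded gauss_vec_def I(1)]]
    by (simp add: gauss_vec_def I(1))
  finally show ?thesis .
qed

lemma ip_fun_upd: "k < d \<Longrightarrow> ip d (x(k := y)) \<theta> = ip d x \<theta> + (y - x k) * \<theta> k"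
proof -
  have "(x(k := y)) i * \<theta> i = x i * \<theta> i + (if i = k then (y - x k) * \<theta> k else 0)" for i
    by (simp add: algebra_simps)
  then show "k < d \<Longrightarrow> ?thesis"
    unfolding ip_def by (simp only: sum.distrib) simp
qed

lemma has_real_derivative_ip_fun_upd:
  "k < d \<Longrightarrow> ((\<lambda>y. ip d (x(k := y)) \<theta>) has_real_derivative \<theta> k) (at y)"
  by (simp add: ip_fun_upd) (auto intro!: derivative_eq_intros)

lemma continuous_on_comp_ip_fun_upd:
  "continuous_on UNIV g \<Longrightarrow> k < d \<Longrightarrow> continuous_on UNIV (\<lambda>y. g (ip d (x(k := y)) \<theta>))"
  by (rule continuous_on_compose2[of UNIV g]) (auto simp: ip_fun_upd intro!: continuous_intros)

lemma has_real_derivative_ridge_mult_fun_upd: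
  fixes g g' :: "real \<Rightarrow> real" and q q' :: "(nat \<Rightarrow> real) \<Rightarrow> real"
  assumes k: "k < d" and g: "\<And>u. (g has_real_derivative g' u) (at u)"
    and q: "\<And>y. ((\<lambda>y. q (x(k := y))) has_real_derivative q' (x(k := y))) (at y)"
  shows "((\<lambda>y. g (ip d (x(k := y)) \<theta>) * q (x(k := y))) has_real_derivative
      \<theta> k * (g' (ip d (x(k := y)) \<theta>) * q (x(k := y))) + g (ip d (x(k := y)) \<theta>) * q' (x(k := y))) (at y)"
  using DERIV_mult[OF DERIV_chain2[OF g has_real_derivative_ip_fun_upd[OF k]] q]
  by (simp add: algebra_simps)

lemma continuous_on_ridge_mult_deriv_fun_upd:
  fixes g g' :: "real \<Rightarrow> real" and q q' :: "(nat \<Rightarrow> real) \<Rightarrow> real"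
  assumes k: "k < d" and g: "\<And>u. (g has_real_derivative g' u) (at u)" and g': "continuous_on UNIV g'"
    and q: "\<And>y. ((\<lambda>y. q (x(k := y))) has_real_derivative q' (x(k := y))) (at y)"
    and q': "continuous_on UNIV (\<lambda>y. q' (x(k := y)))"
  shows "continuous_on UNIV (\<lambda>y. \<theta> k * (g' (ip d (x(k := y)) \<theta>) * q (x(k := y)))
    + g (ip d (x(k := y)) \<theta>) * q' (x(k := y)))"
proof -
  have "continuous_on UNIV g" "continuous_on UNIV (\<lambda>y. q (x(k := y)))"
    using g q by (meson DERIV_continuous continuous_at_imp_continuous_on)+
  then show ?thesis
    using continuous_on_comp_ip_fun_upd[OF _ k] g' q' by (intro continuous_intros) auto
qed

lemma gauss_vec_integration_by_parts_ridge:
  fixes g g' :: "real \<Rightarrow> real" and q q' :: "(nat \<Rightarrow> real) \<Rightarrow> real"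
  assumes k: "k < d"
    and g: "\<And>u. (g has_real_derivative g' u) (at u)" and g': "continuous_on UNIV g'"
    and bounded: "bounded (range g)" "bounded (range g')"
    and [measurable]: "q \<in> borel_measurable (gauss_vec d)" "q' \<in> borel_measurable (gauss_vec d)"
    and q: "\<And>x y. ((\<lambda>y. q (x(k := y))) has_real_derivative q' (x(k := y))) (at y)"
    and q': "\<And>x. continuous_on UNIV (\<lambda>y. q' (x(k := y)))"
    and bound: "\<And>x. \<bar>q x\<bar> \<le> K * gauss_weight d x ^ n"
    and bound': "\<And>x. \<bar>q' x\<bar> \<le> K * gauss_weight d x ^ n"
  shows "(\<integral>x. x k * (g (ip d x \<theta>) * q x) \<partial>gauss_vec d)
    = \<theta> k * (\<integral>x. g' (ip d x \<theta>) * q x \<partial>gauss_vec d) + (\<integral>x. g (ip d x \<theta>) * q' x \<partial>gauss_vec d)"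
proof -
  obtain B where B: "\<And>u. \<bar>g u\<bar> \<le> B" "\<And>u. \<bar>g' u\<bar> \<le> B"
    using bounded_range_common_bound[OF bounded] by blast
  have "continuous_on UNIV g"
    using g by (meson DERIV_continuous continuous_at_imp_continuous_on)
  then have [measurable]: "g \<in> borel_measurable borel" "g' \<in> borel_measurable borel"
    using g' by (auto intro: borel_measurable_continuous_onI)
  let ?W = "\<lambda>x. K * gauss_weight d x ^ n"
  have bounds: "\<bar>g (ip d x \<theta>) * q x\<bar> \<le> B * ?W x" "\<bar>g' (ip d x \<theta>) * q x\<bar> \<le> B * ?W x"
    "\<bar>g (ip d x \<theta>) * q' x\<bar> \<le> B * ?W x" for x
    unfolding abs_mult using order_trans[OF abs_ge_zero B(1)]
    by (intro mult_mono B bound bound' abs_ge_zero; assumption)+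
  have ints: "integrable (gauss_vec d) (\<lambda>x. g' (ip d x \<theta>) * q x)"
    "integrable (gauss_vec d) (\<lambda>x. g (ip d x \<theta>) * q' x)"
    by (rule integrable_gauss_vec_weight_bounded[where K = "B * K" and n = n], measurable,
        use bounds in \<open>simp add: mult.assoc\<close>)+
  have "(\<integral>x. x k * (g (ip d x \<theta>) * q x) \<partial>gauss_vec d)
      = (\<integral>x. \<theta> k * (g' (ip d x \<theta>) * q x) + g (ip d x \<theta>) * q' x \<partial>gauss_vec d)"
  proof (rule gauss_vec_integration_by_parts[OF k, where K = "B * K" and K' = "(\<bar>\<theta> k\<bar> + 1) * B * K"])
    show "((\<lambda>y. g (ip d (x(k := y)) \<theta>) * q (x(k := y))) has_real_derivative
        \<theta> k * (g' (ip d (x(k := y)) \<theta>) * q (x(k := y))) + g (ip d (x(k := y)) \<theta>) * q' (x(k := y))) (at y)"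
      for x y
      using k g q by (rule has_real_derivative_ridge_mult_fun_upd)
    show "continuous_on UNIV (\<lambda>y. \<theta> k * (g' (ip d (x(k := y)) \<theta>) * q (x(k := y)))
        + g (ip d (x(k := y)) \<theta>) * q' (x(k := y)))" for x
      using k g g' q q' by (rule continuous_on_ridge_mult_deriv_fun_upd)
    show "\<bar>g (ip d x \<theta>) * q x\<bar> \<le> B * K * gauss_weight d x ^ n" for x
      using bounds(1)[of x] by (simp add: mult.assoc)
    fix x
    have "\<bar>\<theta> k * (g' (ip d x \<theta>) * q x) + g (ip d x \<theta>) * q' x\<bar>
        \<le> \<bar>\<theta> k\<bar> * \<bar>g' (ip d x \<theta>) * q x\<bar> + \<bar>g (ip d x \<theta>) * q' x\<bar>"
      using abs_triangle_ineq[of "\<theta> k * (g' (ip d x \<theta>) * q x)" "g (ip d x \<theta>) * q' x"]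
      by (simp add: abs_mult)
    also have "\<dots> \<le> \<bar>\<theta> k\<bar> * (B * ?W x) + B * ?W x"
      by (intro add_mono mult_left_mono bounds) auto
    finally show "\<bar>\<theta> k * (g' (ip d x \<theta>) * q x) + g (ip d x \<theta>) * q' x\<bar>
        \<le> (\<bar>\<theta> k\<bar> + 1) * B * K * gauss_weight d x ^ n"
      by (simp add: algebra_simps)
  qed (use k in measurable)
  also have "\<dots> = \<theta> k * (\<integral>x. g' (ip d x \<theta>) * q x \<partial>gauss_vec d) + (\<integral>x. g (ip d x \<theta>) * q' x \<partial>gauss_vec d)"
    using ints by simp
  finally show ?thesis .
qed

section \<open>Derivatives of \<open>gam\<close>\<close>

definition sigmoid :: "real \<Rightarrow> real" where
  "sigmoid z = exp z / (1 + exp z)"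

lemma sigmoid_gt_0: "0 < sigmoid z" and sigmoid_less_1: "sigmoid z < 1"
  unfolding sigmoid_def by (auto simp: add_pos_pos)

lemma has_real_derivative_sigmoid: "(sigmoid has_real_derivative sigmoid z * (1 - sigmoid z)) (at z)"
proof -
  have "1 + exp z \<noteq> 0"
    by (metis add_pos_pos exp_gt_zero less_irrefl zero_less_one)
  then show ?thesis
    unfolding sigmoid_def[abs_def]
    by (auto intro!: derivative_eq_intros simp: field_simps power2_eq_square)
qed

text \<open>
  Since \<open>sigmoid' = sigmoid (1 - sigmoid)\<close>, the derivative of \<open>poly p \<circ> sigmoid\<close> is again a
  polynomial in the sigmoid. As \<open>gam = sigmoid (1 - sigmoid) (1 - 2 sigmoid)\<close>, all derivatives
  of \<open>gam\<close> are polynomials in a function with values in \<open>(0, 1)\<close>, hence bounded.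
\<close>

definition sigmoid_pderiv :: "real poly \<Rightarrow> real poly" where
  "sigmoid_pderiv p = pderiv p * [:0, 1, -1:]"

lemma has_real_derivative_poly_sigmoid:
  "((\<lambda>z. poly p (sigmoid z)) has_real_derivative poly (sigmoid_pderiv p) (sigmoid z)) (at z)"
  using DERIV_chain2[OF poly_DERIV has_real_derivative_sigmoid]
  by (simp add: sigmoid_pderiv_def algebra_simps)

lemma bounded_range_poly_sigmoid: "bounded (range (\<lambda>z. poly p (sigmoid z)))"
proof (rule bounded_subset)
  show "bounded (poly p ` {0..1})"
    by (intro compact_imp_bounded compact_continuous_image continuous_intros) auto
  show "range (\<lambda>z. poly p (sigmoid z)) \<subseteq> poly p ` {0..1}"
  proof (rule image_subsetI)
    fix z
    have "sigmoid z \<in> {0..1}"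
      using sigmoid_gt_0[of z] sigmoid_less_1[of z] by simp
    then show "poly p (sigmoid z) \<in> poly p ` {0..1}" by (rule imageI)
  qed
qed

definition gam_deriv :: "nat \<Rightarrow> real \<Rightarrow> real" where
  "gam_deriv n z = poly ((sigmoid_pderiv ^^ n) [:0, 1, -3, 2:]) (sigmoid z)"

lemma gam_sigmoid: "gam z = sigmoid z * (1 - sigmoid z) * (1 - 2 * sigmoid z)"
proof -
  have "1 + exp z \<noteq> 0"
    by (metis add_pos_pos exp_gt_zero less_irrefl zero_less_one)
  then show ?thesis
    unfolding gam_def sigmoid_def by (simp add: field_simps power3_eq_cube)
qed

lemma gam_deriv_0: "gam_deriv 0 = gam"
  by (rule ext) (simp add: gam_deriv_def gam_sigmoid algebra_simps)

lemma has_real_derivative_gam_deriv: "(gam_deriv n has_real_derivative gam_deriv (Suc n) z) (at z)"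
  unfolding gam_deriv_def[abs_def] using has_real_derivative_poly_sigmoid by simp

lemma continuous_on_gam_deriv: "continuous_on UNIV (gam_deriv n)"
  by (meson DERIV_continuous continuous_at_imp_continuous_on has_real_derivative_gam_deriv)

lemma measurable_gam_deriv [measurable]: "gam_deriv n \<in> borel_measurable borel"
  by (rule borel_measurable_continuous_onI[OF continuous_on_gam_deriv])

lemma measurable_gam [measurable]: "gam \<in> borel_measurable borel"
  using measurable_gam_deriv[of 0] by (simp add: gam_deriv_0)

lemma bounded_range_gam_deriv: "bounded (range (gam_deriv n))"
  unfolding gam_deriv_def[abs_def] by (rule bounded_range_poly_sigmoid)

lemma abs_gam_le_1: "\<bar>gam z\<bar> \<le> 1"
  unfolding gam_sigmoid abs_mult
  using sigmoid_gt_0[of z] sigmoid_less_1[of z] by (intro mult_le_one) auto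

section \<open>The third moment tensor\<close>

lemmas gauss_vec_integration_by_parts_gam_deriv =
  gauss_vec_integration_by_parts_ridge[OF _ has_real_derivative_gam_deriv continuous_on_gam_deriv
    bounded_range_gam_deriv bounded_range_gam_deriv]

lemma has_real_derivative_coord_fun_upd: "((\<lambda>y. (x(k := y)) i) has_real_derivative kd i k) (at y)"
  by (cases "i = k") (auto simp: kd_def intro!: derivative_eq_intros)

lemma continuous_on_coord_fun_upd: "continuous_on UNIV (\<lambda>y. (x(k := y)) i)"
  by (cases "i = k") (auto intro: continuous_intros)

lemma abs_coord_mult_le_gauss_weight:
  assumes "i < d" "j < d"
  shows "\<bar>x i * x j\<bar> \<le> gauss_weight d x ^ 2"
  using mult_mono[OF abs_coord_le_gauss_weight[OF assms(1)] abs_coord_le_gauss_weight[OF assms(2)]]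
    gauss_weight_ge_1[of d x]
  by (simp add: abs_mult power2_eq_square)

lemma integrable_gam_deriv_ip_mult_coord:
  assumes "l < d"
  shows "integrable (gauss_vec d) (\<lambda>x. gam_deriv m (ip d x \<theta>) * x l)"
proof -
  obtain B where B: "\<And>u. \<bar>gam_deriv m u\<bar> \<le> B"
    using bounded_range_gam_deriv[of m] unfolding bounded_iff by auto
  show ?thesis
  proof (rule integrable_gauss_vec_weight_bounded[where K = B and n = 1])
    show "\<bar>gam_deriv m (ip d x \<theta>) * x l\<bar> \<le> B * gauss_weight d x ^ 1" for x
      unfolding abs_mult using B order_trans[OF abs_ge_zero B] abs_coord_le_gauss_weight[OF assms]
      by (simp add: mult_mono)
  qed (use assms in measurable)
qed

lemma integral_gam_deriv_ip_mult_coord: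
  assumes "i < d"
  shows "(\<integral>x. gam_deriv m (ip d x \<theta>) * x i \<partial>gauss_vec d)
    = \<theta> i * (\<integral>x. gam_deriv (Suc m) (ip d x \<theta>) \<partial>gauss_vec d)"
  using gauss_vec_integration_by_parts_gam_deriv[OF assms, of "\<lambda>_. 1" "\<lambda>_. 0" 1 0]
  by (simp add: mult.commute)

lemma integral_gam_deriv_ip_mult_coord2:
  assumes "i < d" "j < d"
  shows "(\<integral>x. gam_deriv m (ip d x \<theta>) * x i * x j \<partial>gauss_vec d)
    = \<theta> j * (\<integral>x. gam_deriv (Suc m) (ip d x \<theta>) * x i \<partial>gauss_vec d)
      + kd i j * (\<integral>x. gam_deriv m (ip d x \<theta>) \<partial>gauss_vec d)"
proof -
  have "\<bar>kd i j\<bar> \<le> 1 * gauss_weight d x ^ 1" for x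
    using gauss_weight_ge_1[of d x] by (simp add: kd_def)
  with assms have "(\<integral>x. x j * (gam_deriv m (ip d x \<theta>) * x i) \<partial>gauss_vec d)
    = \<theta> j * (\<integral>x. gam_deriv (Suc m) (ip d x \<theta>) * x i \<partial>gauss_vec d)
      + (\<integral>x. gam_deriv m (ip d x \<theta>) * kd i j \<partial>gauss_vec d)"
    by (intro gauss_vec_integration_by_parts_gam_deriv[OF assms(2) _ _ has_real_derivative_coord_fun_upd,
          where K = 1 and n = 1])
      (simp_all add: abs_coord_le_gauss_weight)
  then show ?thesis
    by (simp add: ac_simps)
qed

lemma integral_gam_deriv_ip_mult_coord3:
  assumes "i < d" "j < d" "k < d"
  shows "(\<integral>x. gam_deriv m (ip d x \<theta>) * x i * x j * x k \<partial>gauss_vec d)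
    = \<theta> k * (\<integral>x. gam_deriv (Suc m) (ip d x \<theta>) * x i * x j \<partial>gauss_vec d)
      + kd i k * (\<integral>x. gam_deriv m (ip d x \<theta>) * x j \<partial>gauss_vec d)
      + kd j k * (\<integral>x. gam_deriv m (ip d x \<theta>) * x i \<partial>gauss_vec d)"
proof -
  let ?q' = "\<lambda>x. kd i k * x j + kd j k * x i"
  have q: "\<bar>x i * x j\<bar> \<le> 2 * gauss_weight d x ^ 2" for x
    using abs_coord_mult_le_gauss_weight[OF assms(1,2), of x] by simp
  have q': "\<bar>?q' x\<bar> \<le> 2 * gauss_weight d x ^ 2" for x
  proof -
    have "\<bar>?q' x\<bar> \<le> \<bar>x j\<bar> + \<bar>x i\<bar>"
      using abs_triangle_ineq[of "kd i k * x j" "kd j k * x i"] by (simp add: kd_def abs_mult)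
    also have "\<dots> \<le> 2 * gauss_weight d x"
      using abs_coord_le_gauss_weight[OF assms(1), of x] abs_coord_le_gauss_weight[OF assms(2), of x]
      by linarith
    also have "\<dots> \<le> 2 * gauss_weight d x ^ 2"
      using gauss_weight_ge_1[of d x] by (simp add: power2_eq_square)
    finally show ?thesis .
  qed
  have deriv: "((\<lambda>y. (x(k := y)) i * (x(k := y)) j) has_real_derivative ?q' (x(k := y))) (at y)" for x y
    using DERIV_mult[OF has_real_derivative_coord_fun_upd has_real_derivative_coord_fun_upd]
    by (simp add: ac_simps)
  have cont: "continuous_on UNIV (\<lambda>y. ?q' (x(k := y)))" for x
    by (intro continuous_intros continuous_on_coord_fun_upd)
  have "(\<integral>x. x k * (gam_deriv m (ip d x \<theta>) * (x i * x j)) \<partial>gauss_vec d)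
    = \<theta> k * (\<integral>x. gam_deriv (Suc m) (ip d x \<theta>) * (x i * x j) \<partial>gauss_vec d)
      + (\<integral>x. gam_deriv m (ip d x \<theta>) * ?q' x \<partial>gauss_vec d)"
    by (rule gauss_vec_integration_by_parts_gam_deriv[OF assms(3) _ _ deriv cont q q'])
      (use assms in measurable)
  moreover have "(\<integral>x. gam_deriv m (ip d x \<theta>) * ?q' x \<partial>gauss_vec d)
    = kd i k * (\<integral>x. gam_deriv m (ip d x \<theta>) * x j \<partial>gauss_vec d)
      + kd j k * (\<integral>x. gam_deriv m (ip d x \<theta>) * x i \<partial>gauss_vec d)"
  proof -
    have "(\<integral>x. gam_deriv m (ip d x \<theta>) * ?q' x \<partial>gauss_vec d)
      = (\<integral>x. kd i k * (gam_deriv m (ip d x \<theta>) * x j) + kd j k * (gam_deriv m (ip d x \<theta>) * x i)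
          \<partial>gauss_vec d)"
      by (simp add: algebra_simps)
    also have "\<dots> = kd i k * (\<integral>x. gam_deriv m (ip d x \<theta>) * x j \<partial>gauss_vec d)
      + kd j k * (\<integral>x. gam_deriv m (ip d x \<theta>) * x i \<partial>gauss_vec d)"
      using integrable_gam_deriv_ip_mult_coord[OF assms(1)]
        integrable_gam_deriv_ip_mult_coord[OF assms(2)]
      by simp
    finally show ?thesis .
  qed
  ultimately show ?thesis
    by (simp add: ac_simps)
qed

text \<open>For \<open>k = 0\<close> the factor \<open>real k\<close> vanishes, so the truncated \<open>k - 1\<close> is harmless.\<close>

lemma integral_pow_Suc_mult_gam_deriv:
  "(\<integral>z. z ^ Suc k * gam_deriv m (t * z) \<partial>std_normal_M)
    = real k * (\<integral>z. z ^ (k - 1) * gam_deriv m (t * z) \<partial>std_normal_M)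
      + t * (\<integral>z. z ^ k * gam_deriv (Suc m) (t * z) \<partial>std_normal_M)"
proof -
  obtain B where B: "\<And>u. \<bar>gam_deriv m u\<bar> \<le> B" "\<And>u. \<bar>gam_deriv (Suc m) u\<bar> \<le> B"
    using bounded_range_common_bound[OF bounded_range_gam_deriv bounded_range_gam_deriv] by blast
  have bound: "\<bar>z ^ l * gam_deriv n (t * z)\<bar> \<le> B * (1 + z\<^sup>2) ^ k"
    if "l \<le> k" "n = m \<or> n = Suc m" for l n z
    using that B by (auto intro: abs_power_mult_le_poly_weight)
  have int: "integrable std_normal_M (\<lambda>z. z ^ l * gam_deriv n (t * z))"
    if "l \<le> k" "n = m \<or> n = Suc m" for l n
    by (rule integrable_std_normal_M_poly_bounded[OF _ bound[OF that]]) measurable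
  have "(\<integral>z. z * (z ^ k * gam_deriv m (t * z)) \<partial>std_normal_M)
    = (\<integral>z. real k * (z ^ (k - 1) * gam_deriv m (t * z)) + t * (z ^ k * gam_deriv (Suc m) (t * z))
        \<partial>std_normal_M)"
  proof (rule std_normal_integration_by_parts[where K = B and K' = "(real k + \<bar>t\<bar>) * B" and n = k])
    show "((\<lambda>z. z ^ k * gam_deriv m (t * z)) has_real_derivative
        real k * (z ^ (k - 1) * gam_deriv m (t * z)) + t * (z ^ k * gam_deriv (Suc m) (t * z))) (at z)" for z
    proof -
      have "((\<lambda>z. gam_deriv m (t * z)) has_real_derivative gam_deriv (Suc m) (t * z) * t) (at z)"
        by (rule DERIV_chain2[OF has_real_derivative_gam_deriv DERIV_cmult_Id])
      from DERIV_mult[OF DERIV_pow this] show ?thesis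
        by (simp add: algebra_simps)
    qed
    show "continuous_on UNIV (\<lambda>z. real k * (z ^ (k - 1) * gam_deriv m (t * z))
        + t * (z ^ k * gam_deriv (Suc m) (t * z)))"
      by (intro continuous_intros continuous_on_compose2[OF continuous_on_gam_deriv]) auto
    show "\<bar>z ^ k * gam_deriv m (t * z)\<bar> \<le> B * (1 + z\<^sup>2) ^ k" for z
      by (rule bound) auto
    fix z
    have "\<bar>real k * (z ^ (k - 1) * gam_deriv m (t * z)) + t * (z ^ k * gam_deriv (Suc m) (t * z))\<bar>
        \<le> real k * \<bar>z ^ (k - 1) * gam_deriv m (t * z)\<bar> + \<bar>t\<bar> * \<bar>z ^ k * gam_deriv (Suc m) (t * z)\<bar>"
      by (metis abs_mult abs_of_nat abs_triangle_ineq)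
    also have "\<dots> \<le> real k * (B * (1 + z\<^sup>2) ^ k) + \<bar>t\<bar> * (B * (1 + z\<^sup>2) ^ k)"
      by (intro add_mono mult_left_mono bound) auto
    finally show "\<bar>real k * (z ^ (k - 1) * gam_deriv m (t * z)) + t * (z ^ k * gam_deriv (Suc m) (t * z))\<bar>
        \<le> (real k + \<bar>t\<bar>) * B * (1 + z\<^sup>2) ^ k"
      by (simp add: algebra_simps)
  qed
  then show ?thesis
    using int[of "k - 1" m] int[of k "Suc m"] by (simp add: mult.assoc)
qed

lemma coef_b_eq_integral_gam_deriv:
  "t \<noteq> 0 \<Longrightarrow> coef_b t = (\<integral>z. gam_deriv 1 (t * z) \<partial>std_normal_M)"
  using integral_pow_Suc_mult_gam_deriv[of 0 0 t]
  by (simp add: coef_b_def gam_deriv_0)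

lemma coef_a_eq_integral_gam_deriv:
  assumes "t \<noteq> 0"
  shows "coef_a t = (\<integral>z. gam_deriv 3 (t * z) \<partial>std_normal_M)"
proof -
  have "(\<integral>z. z ^ 3 * gam (t * z) \<partial>std_normal_M) - 3 * (\<integral>z. z * gam (t * z) \<partial>std_normal_M)
      = t ^ 3 * (\<integral>z. gam_deriv 3 (t * z) \<partial>std_normal_M)"
    using integral_pow_Suc_mult_gam_deriv[of 2 0 t] integral_pow_Suc_mult_gam_deriv[of 1 1 t]
      integral_pow_Suc_mult_gam_deriv[of 0 2 t] integral_pow_Suc_mult_gam_deriv[of 0 0 t]
    by (simp add: gam_deriv_0 numeral_eq_Suc algebra_simps power3_eq_cube)
  then show ?thesis
    using assms by (simp add: coef_a_def)
qed

lemma integral_gam_ip_mult_coord3: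
  assumes "i < d" "j < d" "k < d" and "vnorm d \<theta> \<noteq> 0"
  shows "(\<integral>x. gam (ip d x \<theta>) * x i * x j * x k \<partial>gauss_vec d)
    = coef_a (vnorm d \<theta>) * \<theta> i * \<theta> j * \<theta> k
      + coef_b (vnorm d \<theta>) * (kd j k * \<theta> i + kd i k * \<theta> j + kd i j * \<theta> k)"
proof -
  have a: "(\<integral>x. gam_deriv (Suc (Suc (Suc 0))) (ip d x \<theta>) \<partial>gauss_vec d) = coef_a (vnorm d \<theta>)"
    and b: "(\<integral>x. gam_deriv (Suc 0) (ip d x \<theta>) \<partial>gauss_vec d) = coef_b (vnorm d \<theta>)"
    using assms(4) by (simp_all add: integral_gauss_vec_ip coef_a_eq_integral_gam_deriv
        coef_b_eq_integral_gam_deriv numeral_eq_Suc)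
  show ?thesis
    unfolding gam_deriv_0[symmetric] integral_gam_deriv_ip_mult_coord3[OF assms(1-3)]
      integral_gam_deriv_ip_mult_coord2[OF assms(1,2)] integral_gam_deriv_ip_mult_coord[OF assms(1)]
      integral_gam_deriv_ip_mult_coord[OF assms(2)] a b
    by (simp add: algebra_simps)
qed

lemma sum_mult_kd: "j < d \<Longrightarrow> (\<Sum>k<d. f k * kd j k) = (f j :: real)"
  by (simp add: kd_def if_distrib cong: if_cong)

lemma sum_contract_sym_tensor:
  fixes v \<theta> :: "nat \<Rightarrow> real"
  shows "(\<Sum>i<d. \<Sum>j<d. \<Sum>k<d. v i * v j * \<theta> k *
      (a * \<theta> i * \<theta> j * \<theta> k + b * (kd j k * \<theta> i + kd i k * \<theta> j + kd i j * \<theta> k)))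
    = (a * ip d \<theta> \<theta> + 2 * b) * (ip d v \<theta>)\<^sup>2 + b * ip d \<theta> \<theta> * ip d v v"
    (is "(\<Sum>i<d. \<Sum>j<d. \<Sum>k<d. ?t i j k) = _")
proof -
  let ?c = "a * ip d \<theta> \<theta> + 2 * b"
  have "(\<Sum>k<d. ?t i j k) = (v i * ?c * \<theta> i) * (v j * \<theta> j) + (v i * b * ip d \<theta> \<theta>) * (v j * kd i j)"
    if "i < d" "j < d" for i j
  proof -
    have "(\<Sum>k<d. ?t i j k) = (\<Sum>k<d. (v i * v j * a * \<theta> i * \<theta> j) * (\<theta> k * \<theta> k)
        + (v i * v j * b * \<theta> i) * (\<theta> k * kd j k) + (v i * v j * b * \<theta> j) * (\<theta> k * kd i k)
        + (v i * v j * b * kd i j) * (\<theta> k * \<theta> k))"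
      by (rule sum.cong) (auto simp: algebra_simps)
    also have "\<dots> = (v i * v j * a * \<theta> i * \<theta> j) * ip d \<theta> \<theta> + (v i * v j * b * \<theta> i) * \<theta> j
        + (v i * v j * b * \<theta> j) * \<theta> i + (v i * v j * b * kd i j) * ip d \<theta> \<theta>"
      using that by (simp add: sum.distrib sum_distrib_left[symmetric] sum_mult_kd ip_def)
    finally show ?thesis by (simp add: algebra_simps)
  qed
  then have "(\<Sum>i<d. \<Sum>j<d. \<Sum>k<d. ?t i j k)
      = (\<Sum>i<d. \<Sum>j<d. (v i * ?c * \<theta> i) * (v j * \<theta> j) + (v i * b * ip d \<theta> \<theta>) * (v j * kd i j))"
    by (intro sum.cong) auto
  also have "\<dots> = (\<Sum>i<d. (v i * ?c * \<theta> i) * ip d v \<theta> + (v i * b * ip d \<theta> \<theta>) * v i)"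
    by (intro sum.cong refl)
      (simp add: sum.distrib sum_distrib_left[symmetric] sum_mult_kd ip_def)
  also have "\<dots> = (?c * ip d v \<theta>) * (\<Sum>i<d. v i * \<theta> i) + (b * ip d \<theta> \<theta>) * (\<Sum>i<d. v i * v i)"
    by (simp add: sum.distrib sum_distrib_left algebra_simps)
  finally show ?thesis
    by (simp add: ip_def power2_eq_square)
qed

lemma integral_triple_sum:
  fixes f :: "'i \<Rightarrow> 'j \<Rightarrow> 'k \<Rightarrow> 'a \<Rightarrow> real"
  assumes "\<And>i j k. i \<in> I \<Longrightarrow> j \<in> J \<Longrightarrow> k \<in> K \<Longrightarrow> integrable M (f i j k)"
  shows "(\<integral>x. (\<Sum>i\<in>I. \<Sum>j\<in>J. \<Sum>k\<in>K. f i j k x) \<partial>M) = (\<Sum>i\<in>I. \<Sum>j\<in>J. \<Sum>k\<in>K. \<integral>x. f i j k x \<partial>M)"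
proof -
  have "(\<integral>x. (\<Sum>i\<in>I. \<Sum>j\<in>J. \<Sum>k\<in>K. f i j k x) \<partial>M) = (\<Sum>i\<in>I. \<integral>x. (\<Sum>j\<in>J. \<Sum>k\<in>K. f i j k x) \<partial>M)"
    using assms by (intro Bochner_Integration.integral_sum Bochner_Integration.integrable_sum) auto
  also have "\<dots> = (\<Sum>i\<in>I. \<Sum>j\<in>J. \<integral>x. (\<Sum>k\<in>K. f i j k x) \<partial>M)"
    using assms
    by (intro sum.cong refl Bochner_Integration.integral_sum Bochner_Integration.integrable_sum) auto
  also have "\<dots> = (\<Sum>i\<in>I. \<Sum>j\<in>J. \<Sum>k\<in>K. \<integral>x. f i j k x \<partial>M)"
    using assms by (intro sum.cong refl Bochner_Integration.integral_sum) auto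
  finally show ?thesis .
qed

lemma integral_gam_ip_square_ip:
  assumes "vnorm d \<theta> \<noteq> 0"
  shows "(\<integral>x. gam (ip d x \<theta>) * (ip d x v)\<^sup>2 * ip d x \<theta> \<partial>gauss_vec d)
    = (coef_a (vnorm d \<theta>) * (vnorm d \<theta>)\<^sup>2 + 2 * coef_b (vnorm d \<theta>)) * (ip d v \<theta>)\<^sup>2
      + coef_b (vnorm d \<theta>) * (vnorm d \<theta>)\<^sup>2 * (vnorm d v)\<^sup>2"
proof -
  let ?m = "\<lambda>i j k x. gam (ip d x \<theta>) * x i * x j * x k"
  have int: "integrable (gauss_vec d) (?m i j k)" if "i < d" "j < d" "k < d" for i j k
  proof (rule integrable_gauss_vec_weight_bounded[where K = 1 and n = 3])
    fix x
    have "\<bar>?m i j k x\<bar> \<le> 1 * gauss_weight d x * gauss_weight d x * gauss_weight d x"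
      unfolding abs_mult using abs_gam_le_1 that
      by (intro mult_mono abs_coord_le_gauss_weight)
        (auto simp: order_trans[OF zero_le_one gauss_weight_ge_1])
    then show "\<bar>?m i j k x\<bar> \<le> 1 * gauss_weight d x ^ 3"
      by (simp add: power3_eq_cube)
  qed (use that in measurable)
  have expand: "gam (ip d x \<theta>) * (ip d x v)\<^sup>2 * ip d x \<theta>
      = (\<Sum>i<d. \<Sum>j<d. \<Sum>k<d. v i * v j * \<theta> k * ?m i j k x)" for x
  proof -
    have "gam (ip d x \<theta>) * (ip d x v)\<^sup>2 * ip d x \<theta>
        = gam (ip d x \<theta>) * ((\<Sum>i<d. x i * v i) * (\<Sum>j<d. x j * v j) * (\<Sum>k<d. x k * \<theta> k))"
      by (simp add: ip_def power2_eq_square ac_simps)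
    then show ?thesis
      by (simp add: sum_distrib_left sum_distrib_right ac_simps)
  qed
  have "(\<integral>x. gam (ip d x \<theta>) * (ip d x v)\<^sup>2 * ip d x \<theta> \<partial>gauss_vec d)
      = (\<Sum>i<d. \<Sum>j<d. \<Sum>k<d. v i * v j * \<theta> k * (\<integral>x. ?m i j k x \<partial>gauss_vec d))"
    unfolding expand using int by (subst integral_triple_sum) auto
  also have "\<dots> = (\<Sum>i<d. \<Sum>j<d. \<Sum>k<d. v i * v j * \<theta> k *
      (coef_a (vnorm d \<theta>) * \<theta> i * \<theta> j * \<theta> k
        + coef_b (vnorm d \<theta>) * (kd j k * \<theta> i + kd i k * \<theta> j + kd i j * \<theta> k)))"
    using assms by (intro sum.cong refl) (simp add: integral_gam_ip_mult_coord3)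
  finally show ?thesis
    by (simp add: sum_contract_sym_tensor vnorm_square)
qed

section \<open>Two-sided bound for the contracted tensor\<close>

lemma ip_square_le: "(ip d v \<theta>)\<^sup>2 \<le> ip d v v * ip d \<theta> \<theta>"
  using Cauchy_Schwarz_ineq_sum[of v \<theta> "{..<d}"] by (simp add: ip_def power2_eq_square)

lemma gam_nonpos: "0 \<le> y \<Longrightarrow> gam y \<le> 0" and gam_nonneg: "y \<le> 0 \<Longrightarrow> 0 \<le> gam y"
  unfolding gam_def by (auto intro!: divide_nonpos_pos divide_nonneg_pos mult_nonneg_nonpos
      simp: add_pos_pos)

lemma odd_power_mult_gam_nonpos:
  assumes "odd k" "0 < t"
  shows "z ^ k * gam (t * z) \<le> 0"
proof (cases "0 \<le> z")
  case True
  then show ?thesis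
    using assms gam_nonpos[of "t * z"] by (simp add: mult_nonneg_nonpos)
next
  case False
  then have "z ^ k \<le> 0"
    using assms(1) by (simp add: power_le_zero_eq odd_pos)
  moreover have "0 \<le> gam (t * z)"
    using assms(2) False by (intro gam_nonneg) (simp add: mult_pos_neg less_imp_le)
  ultimately show ?thesis
    by (rule mult_nonpos_nonneg)
qed

lemma gam_le_neg_bound:
  assumes "0 < c" "c \<le> y" "y \<le> C"
  shows "gam y \<le> - (c / (1 + exp C) ^ 3)"
proof -
  have "c \<le> exp y - 1"
    using assms exp_ge_add_one_self[of y] by linarith
  also have "\<dots> \<le> exp y * (exp y - 1)"
    using assms mult_right_mono[of 1 "exp y" "exp y - 1"] by simp
  finally have "c / (1 + exp C) ^ 3 \<le> exp y * (exp y - 1) / (1 + exp y) ^ 3"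
    using assms by (intro frac_le power_mono) (auto simp: add_pos_pos)
  moreover have "gam y = - (exp y * (exp y - 1) / (1 + exp y) ^ 3)"
    unfolding gam_def minus_divide_left by (simp add: algebra_simps)
  ultimately show ?thesis
    by linarith
qed

lemma integral_std_normal_M_le_neg:
  fixes f :: "real \<Rightarrow> real"
  assumes [measurable]: "f \<in> borel_measurable borel" and "integrable std_normal_M f"
    and nonpos: "\<And>z. f z \<le> 0" and neg: "\<And>z. 1 \<le> z \<Longrightarrow> z \<le> 2 \<Longrightarrow> f z \<le> - m" and "0 \<le> m"
  shows "(\<integral>z. f z \<partial>std_normal_M) \<le> - (m * std_normal_density 2)"
proof -
  have dens: "std_normal_density 2 \<le> std_normal_density z" if "1 \<le> z" "z \<le> 2" for z
  proof -
    have "z\<^sup>2 \<le> 2\<^sup>2"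
      using that by (intro power_mono) auto
    then show ?thesis
      unfolding std_normal_density_def by (intro mult_left_mono) auto
  qed
  have "std_normal_density z * f z \<le> - (m * std_normal_density 2) * indicator {1..2} z" for z
  proof (cases "z \<in> {1..2}")
    case True
    then have "std_normal_density z * f z \<le> std_normal_density z * (- m)"
      using neg by (intro mult_left_mono) (auto simp: normal_density_nonneg)
    also have "\<dots> \<le> std_normal_density 2 * (- m)"
      using True \<open>0 \<le> m\<close> dens by (intro mult_right_mono_neg) auto
    finally show ?thesis
      using True by (simp add: mult.commute)
  next
    case False
    then show ?thesis
      using nonpos[of z] by (simp add: mult_nonneg_nonpos normal_density_nonneg)
  qed
  then have "(\<integral>z. std_normal_density z * f z \<partial>lborel)
      \<le> (\<integral>z. - (m * std_normal_density 2) * indicator {1..2::real} z \<partial>lborel)"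
    using assms(2) by (intro integral_mono) (auto simp: integrable_std_normal_M_iff)
  then show ?thesis
    by (simp add: integral_std_normal_M)
qed

lemma integral_odd_power_mult_gam_le:
  assumes "odd k" "0 < c" "c \<le> t" "t \<le> C"
  shows "(\<integral>z. z ^ k * gam (t * z) \<partial>std_normal_M)
    \<le> - (c / (1 + exp (2 * C)) ^ 3 * std_normal_density 2)"
proof (rule integral_std_normal_M_le_neg)
  have "\<bar>z ^ k * gam (t * z)\<bar> \<le> 1 * (1 + z\<^sup>2) ^ k" for z
    using abs_gam_le_1 by (rule abs_power_mult_le_poly_weight) simp
  then show "integrable std_normal_M (\<lambda>z. z ^ k * gam (t * z))"
    by (rule integrable_std_normal_M_poly_bounded[rotated]) measurable
  show "z ^ k * gam (t * z) \<le> 0" for z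
    using assms by (intro odd_power_mult_gam_nonpos) auto
  show "z ^ k * gam (t * z) \<le> - (c / (1 + exp (2 * C)) ^ 3)" if "1 \<le> z" "z \<le> 2" for z
  proof -
    have "gam (t * z) \<le> - (c / (1 + exp (2 * C)) ^ 3)"
      using assms that mult_mono[of c t 1 z] mult_mono[of t C z 2]
      by (intro gam_le_neg_bound) (auto simp: mult.commute)
    moreover have "0 < c / (1 + exp (2 * C)) ^ 3"
      using assms by (simp add: add_pos_pos)
    ultimately have "z ^ k * gam (t * z) \<le> 1 * gam (t * z)"
      using that by (intro mult_right_mono_neg one_le_power) auto
    with \<open>gam (t * z) \<le> - (c / (1 + exp (2 * C)) ^ 3)\<close> show ?thesis
      by simp
  qed
qed (use assms in \<open>auto simp: add_pos_pos\<close>)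

lemma abs_integral_odd_power_mult_gam_le:
  "\<bar>\<integral>z. z ^ (2 * j + 1) * gam (t * z) \<partial>std_normal_M\<bar> \<le> sqrt (2 / pi) * 2 ^ j * fact j"
proof -
  have int: "integrable std_normal_M (\<lambda>z. \<bar>z\<bar> ^ (2 * j + 1))"
    using integrable_std_normal_moment_abs[of "2 * j + 1"]
      integrable_std_normal_M_iff[of "\<lambda>z. \<bar>z\<bar> ^ (2 * j + 1)"]
    by simp
  have "\<bar>\<integral>z. z ^ (2 * j + 1) * gam (t * z) \<partial>std_normal_M\<bar>
      \<le> (\<integral>z. \<bar>z ^ (2 * j + 1) * gam (t * z)\<bar> \<partial>std_normal_M)"
    by (rule integral_abs_bound)
  also have "\<dots> \<le> (\<integral>z. \<bar>z\<bar> ^ (2 * j + 1) \<partial>std_normal_M)"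
    using int abs_gam_le_1
    by (intro integral_mono') (auto simp: abs_mult power_abs mult_left_le)
  also have "\<dots> = sqrt (2 / pi) * 2 ^ j * fact j"
    using integral_std_normal_moment_abs_odd[of j] by (simp add: integral_std_normal_M)
  finally show ?thesis .
qed

lemma integral_gam_ip_square_ip_eq_moments:
  assumes "vnorm d \<theta> \<noteq> 0"
  defines "t \<equiv> vnorm d \<theta>"
  shows "(\<integral>x. gam (ip d x \<theta>) * (ip d x v)\<^sup>2 * ip d x \<theta> \<partial>gauss_vec d)
    = (\<integral>z. z ^ 3 * gam (t * z) \<partial>std_normal_M) * ((ip d v \<theta>)\<^sup>2 / t)
      + (\<integral>z. z * gam (t * z) \<partial>std_normal_M) * (t * (vnorm d v)\<^sup>2 - (ip d v \<theta>)\<^sup>2 / t)"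
proof -
  define E1 where "E1 = (\<integral>z. z * gam (t * z) \<partial>std_normal_M)"
  define E3 where "E3 = (\<integral>z. z ^ 3 * gam (t * z) \<partial>std_normal_M)"
  have "(\<integral>x. gam (ip d x \<theta>) * (ip d x v)\<^sup>2 * ip d x \<theta> \<partial>gauss_vec d)
      = ((E3 - 3 * E1) / t ^ 3 * t\<^sup>2 + 2 * (E1 / t)) * (ip d v \<theta>)\<^sup>2 + E1 / t * t\<^sup>2 * (vnorm d v)\<^sup>2"
    using integral_gam_ip_square_ip[OF assms(1), of v]
    by (simp add: t_def coef_a_def coef_b_def E1_def E3_def)
  also have "\<dots> = E3 * ((ip d v \<theta>)\<^sup>2 / t) + E1 * (t * (vnorm d v)\<^sup>2 - (ip d v \<theta>)\<^sup>2 / t)"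
    using assms(1) by (simp add: t_def field_simps power2_eq_square power3_eq_cube)
  finally show ?thesis
    by (simp add: E1_def E3_def)
qed

lemma integral_gam_ip_square_ip_bounds:
  assumes "0 < c" "c < vnorm d \<theta>" "vnorm d \<theta> < C"
  defines "m \<equiv> c / (1 + exp (2 * C)) ^ 3 * std_normal_density 2"
  shows "- (2 * C) * (vnorm d v)\<^sup>2 \<le> (\<integral>x. gam (ip d x \<theta>) * (ip d x v)\<^sup>2 * ip d x \<theta> \<partial>gauss_vec d)"
    and "(\<integral>x. gam (ip d x \<theta>) * (ip d x v)\<^sup>2 * ip d x \<theta> \<partial>gauss_vec d) \<le> - (c * m) * (vnorm d v)\<^sup>2"
proof -
  define t where "t = vnorm d \<theta>"
  define E1 where "E1 = (\<integral>z. z * gam (t * z) \<partial>std_normal_M)"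
  define E3 where "E3 = (\<integral>z. z ^ 3 * gam (t * z) \<partial>std_normal_M)"
  define N where "N = (vnorm d v)\<^sup>2"
  define w3 where "w3 = (ip d v \<theta>)\<^sup>2 / t"
  define w1 where "w1 = t * N - w3"
  have t: "0 < t" "c < t" "t < C"
    using assms by (auto simp: t_def)
  have "\<bar>E1\<bar> \<le> sqrt (2 / pi)" "\<bar>E3\<bar> \<le> sqrt (2 / pi) * 2"
    using abs_integral_odd_power_mult_gam_le[of 0 t] abs_integral_odd_power_mult_gam_le[of 1 t]
    by (simp_all add: E1_def E3_def)
  moreover have "sqrt (2 / pi) \<le> 1"
    using pi_gt3 by simp
  moreover have "E1 \<le> - m" "E3 \<le> - m"
    using integral_odd_power_mult_gam_le[of 1 c t C] integral_odd_power_mult_gam_le[of 3 c t C]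
      t assms(1)
    by (simp_all add: E1_def E3_def m_def)
  ultimately have E: "- 2 \<le> E1" "E1 \<le> - m" "- 2 \<le> E3" "E3 \<le> - m"
    unfolding abs_le_iff by linarith+
  have "(ip d v \<theta>)\<^sup>2 \<le> t\<^sup>2 * N"
    using ip_square_le[of d v \<theta>] by (simp add: t_def N_def vnorm_square mult.commute)
  then have w: "0 \<le> w3" "0 \<le> w1" "w1 + w3 = t * N"
    using t by (auto simp: w1_def w3_def field_simps power2_eq_square)
  have "(\<integral>x. gam (ip d x \<theta>) * (ip d x v)\<^sup>2 * ip d x \<theta> \<partial>gauss_vec d) = E3 * w3 + E1 * w1"
    using integral_gam_ip_square_ip_eq_moments[of d \<theta> v] t(1)
    by (simp add: t_def E1_def E3_def w1_def w3_def N_def)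
  moreover have "- 2 * (t * N) \<le> E3 * w3 + E1 * w1" "E3 * w3 + E1 * w1 \<le> - m * (t * N)"
    unfolding w(3)[symmetric]
    using mult_right_mono[OF E(1) w(2)] mult_right_mono[OF E(2) w(2)]
      mult_right_mono[OF E(3) w(1)] mult_right_mono[OF E(4) w(1)]
    by (simp_all add: algebra_simps)
  moreover have "0 \<le> m" "0 \<le> N"
    using assms(1) by (simp_all add: m_def N_def add_pos_pos)
  ultimately show "- (2 * C) * N \<le> (\<integral>x. gam (ip d x \<theta>) * (ip d x v)\<^sup>2 * ip d x \<theta> \<partial>gauss_vec d)"
    and "(\<integral>x. gam (ip d x \<theta>) * (ip d x v)\<^sup>2 * ip d x \<theta> \<partial>gauss_vec d) \<le> - (c * m) * N"
    using mult_right_mono[of c t "m * N"] mult_right_mono[of t C N] t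
    by (simp_all add: algebra_simps)
qed

theorem mainTheorem11:
  fixes c C :: real
  assumes "0 < c" and "c < C"
  shows "(\<forall>d::nat. \<forall>\<theta>::nat \<Rightarrow> real. c < vnorm d \<theta> \<longrightarrow> vnorm d \<theta> < C \<longrightarrow>
            (\<forall>i<d. \<forall>j<d. \<forall>k<d.
               (\<integral>x. gam (ip d x \<theta>) * x i * x j * x k \<partial>gauss_vec d)
               = coef_a (vnorm d \<theta>) * \<theta> i * \<theta> j * \<theta> k
                 + coef_b (vnorm d \<theta>) * (kd j k * \<theta> i + kd i k * \<theta> j + kd i j * \<theta> k)))
       \<and> (\<exists>c1 c2. 0 < c1 \<and> 0 < c2 \<and>
            (\<forall>d::nat. \<forall>\<theta>::nat \<Rightarrow> real. c < vnorm d \<theta> \<longrightarrow> vnorm d \<theta> < C \<longrightarrow>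
               (\<forall>v::nat \<Rightarrow> real.
                  - c2 * (vnorm d v)\<^sup>2
                    \<le> (\<integral>x. gam (ip d x \<theta>) * (ip d x v)\<^sup>2 * ip d x \<theta> \<partial>gauss_vec d)
                  \<and> (\<integral>x. gam (ip d x \<theta>) * (ip d x v)\<^sup>2 * ip d x \<theta> \<partial>gauss_vec d)
                    \<le> - c1 * (vnorm d v)\<^sup>2)))"
proof (intro conjI exI allI impI)
  fix d \<theta> i j k
  assume "c < vnorm d \<theta>" "i < d" "j < d" "k < d"
  with assms(1) show "(\<integral>x. gam (ip d x \<theta>) * x i * x j * x k \<partial>gauss_vec d)
      = coef_a (vnorm d \<theta>) * \<theta> i * \<theta> j * \<theta> k
        + coef_b (vnorm d \<theta>) * (kd j k * \<theta> i + kd i k * \<theta> j + kd i j * \<theta> k)"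
    by (intro integral_gam_ip_mult_coord3) auto
next
  show "0 < c * (c / (1 + exp (2 * C)) ^ 3 * std_normal_density 2)" "0 < 2 * C"
    using assms by (simp_all add: add_pos_pos normal_density_pos)
next
  fix d \<theta> v
  assume "c < vnorm d \<theta>" "vnorm d \<theta> < C"
  with assms(1) show "- (2 * C) * (vnorm d v)\<^sup>2
      \<le> (\<integral>x. gam (ip d x \<theta>) * (ip d x v)\<^sup>2 * ip d x \<theta> \<partial>gauss_vec d)"
    and "(\<integral>x. gam (ip d x \<theta>) * (ip d x v)\<^sup>2 * ip d x \<theta> \<partial>gauss_vec d)
      \<le> - (c * (c / (1 + exp (2 * C)) ^ 3 * std_normal_density 2)) * (vnorm d v)\<^sup>2"
    by (rule integral_gam_ip_square_ip_bounds)+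
qed

end
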